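(* The tent transform $\mathcal{R}f(y)=f(|2y-1|)$ maps $H^2([0,1])$ continuously into the classical Korobov space $\mathbf{E}^2(\mathbb{T})$: there is a constant $C>0$ such that for all $f\in H^2([0,1])$, $\sup_{k\in\mathbb{Z}}|\widehat{\mathcal{R}f}(k)|(1+|k|)^2\le C\|f\|_{H^2([0,1])}$.
   Context: $H^2([0,1])=\{f\in L_2([0,1]):f''\in L_2([0,1])\}$ with $f''$ the second weak derivative, normed by $\|f\|^2_{H^2([0,1])}=\|f\|^2_{L_2}+\|f''\|^2_{L_2}$ (this is $H^2_{\mathrm{mix}}([0,1])$ for $d=1$). $\mathbb{T}$ is identified with $[0,1)$; for $g\in L_1(\mathbb{T})$, $\hat g(k)=\int_0^1 g(x)e^{-2\pi i kx}\,dx$. The classical Korobov space $\mathbf{E}^2(\mathbb{T})$ consists of $g$ with finite norm $\|g\|_{\mathbf{E}^2}=\sup_{k\in\mathbb{Z}}|\hat g(k)|(1+|k|)^2$. *)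

theory Defs
  imports "HOL-Analysis.Analysis"
begin

definition test_fun :: "(real \<Rightarrow> real) \<Rightarrow> bool" where
  "test_fun \<phi> \<longleftrightarrow> (\<forall>n x. (deriv ^^ n) \<phi> differentiable (at x)) \<and>
     (\<exists>a b. 0 < a \<and> a \<le> b \<and> b < 1 \<and> (\<forall>x. x \<notin> {a..b} \<longrightarrow> \<phi> x = 0))"

definition L2_01 :: "(real \<Rightarrow> real) \<Rightarrow> bool" where
  "L2_01 f \<longleftrightarrow> f \<in> borel_measurable (lebesgue_on {0..1}) \<and>
     integrable (lebesgue_on {0..1}) (\<lambda>x. (f x)\<^sup>2)"

text \<open>g is the second weak derivative of f on (0,1), both in L2([0,1]);
  i.e. f belongs to H^2([0,1]) with f'' = g.\<close>
definition H2_with_deriv :: "(real \<Rightarrow> real) \<Rightarrow> (real \<Rightarrow> real) \<Rightarrow> bool" where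
  "H2_with_deriv f g \<longleftrightarrow> L2_01 f \<and> L2_01 g \<and>
     (\<forall>\<phi>. test_fun \<phi> \<longrightarrow>
        integral\<^sup>L (lebesgue_on {0..1}) (\<lambda>x. f x * deriv (deriv \<phi>) x)
        = integral\<^sup>L (lebesgue_on {0..1}) (\<lambda>x. g x * \<phi> x))"

definition H2_norm :: "(real \<Rightarrow> real) \<Rightarrow> (real \<Rightarrow> real) \<Rightarrow> real" where
  "H2_norm f g = sqrt (integral\<^sup>L (lebesgue_on {0..1}) (\<lambda>x. (f x)\<^sup>2)
                     + integral\<^sup>L (lebesgue_on {0..1}) (\<lambda>x. (g x)\<^sup>2))"

definition tent :: "(real \<Rightarrow> real) \<Rightarrow> real \<Rightarrow> real" where
  "tent f y = f \<bar>2 * y - 1\<bar>"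

text \<open>Fourier coefficient on the torus identified with [0,1).\<close>
definition fourier_coeff :: "(real \<Rightarrow> complex) \<Rightarrow> int \<Rightarrow> complex" where
  "fourier_coeff h k = integral\<^sup>L (lebesgue_on {0..1})
      (\<lambda>x. h x * exp (- (2 * pi * \<i> * of_int k * of_real x)))"

end

theory Submission
  imports Defs "HOL-Computational_Algebra.Polynomial"
begin

text \<open>
  Splitting the tent into its two affine halves shows that the k-th Fourier coefficient of
  f(|2y - 1|) is, up to a unimodular factor, the cosine coefficient of f at frequency pi K,
  K = |k|, on [0, 1]. To bound it by O(K^-2), use the test function phi = eta * v in the weak
  definition of f'', where v'' = cos (pi K t) + O(K^-2) with v and v' vanishing at 0 and 1, and
  eta is a smooth cutoff that equals 1 except on boundary layers of width 2 d. The integral of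
  f phi'' is the integral of f'' phi = O(K^-2 ||f''||). The remainder cos (pi K t) - phi'' is
  O(K^-2) in the middle and O(1) on the layers, because there v = O(d^2) and v' = O(d) offset
  the derivatives of eta, of size 1/d^2 and 1/d; with d = 1 / (8 K^4) its L2 norm is O(K^-2),
  and Cauchy-Schwarz concludes.
\<close>

section \<open>Iterated differentiability\<close>

fun differentiable_upto :: "nat \<Rightarrow> (real \<Rightarrow> real) \<Rightarrow> bool" where
  "differentiable_upto 0 f \<longleftrightarrow> (\<forall>x. f differentiable (at x))"
| "differentiable_upto (Suc n) f \<longleftrightarrow>
     (\<forall>x. f differentiable (at x)) \<and> differentiable_upto n (deriv f)"

lemma differentiable_upto_imp_differentiable:
  "differentiable_upto n f \<Longrightarrow> f differentiable (at x)"
  by (cases n) auto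

lemma differentiable_upto_funpow_deriv:
  "differentiable_upto n f \<Longrightarrow> j \<le> n \<Longrightarrow> (deriv ^^ j) f differentiable (at x)"
proof (induction n arbitrary: f j)
  case 0
  then show ?case by simp
next
  case (Suc n)
  show ?case
  proof (cases j)
    case 0
    then show ?thesis using Suc.prems by simp
  next
    case (Suc i)
    then have "(deriv ^^ j) f = (deriv ^^ i) (deriv f)"
      by (simp add: funpow_Suc_right del: funpow.simps)
    then show ?thesis using Suc.IH[of "deriv f" i] Suc.prems \<open>j = Suc i\<close> by simp
  qed
qed

lemma differentiable_upto_SucD: "differentiable_upto (Suc n) f \<Longrightarrow> differentiable_upto n f"
  by (induction n arbitrary: f) auto

lemma differentiable_upto_derivative_sequence:
  assumes "\<And>n x. (F n has_real_derivative F (Suc n) x) (at x)"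
  shows "differentiable_upto n (F 0)"
  using assms
proof (induction n arbitrary: F)
  case 0
  then show ?case using real_differentiable_def by auto
next
  case (Suc n)
  have "deriv (F 0) = F 1"
    using Suc.prems by (intro ext DERIV_imp_deriv) simp
  then show ?case
    using Suc.IH[of "\<lambda>n. F (Suc n)"] Suc.prems real_differentiable_def by auto
qed

lemma deriv_add_fun:
  fixes f g :: "real \<Rightarrow> real"
  assumes "\<And>x. f differentiable (at x)" "\<And>x. g differentiable (at x)"
  shows "deriv (\<lambda>x. f x + g x) = (\<lambda>x. deriv f x + deriv g x)"
proof
  fix x
  have "(f has_real_derivative deriv f x) (at x)" "(g has_real_derivative deriv g x) (at x)"
    using assms DERIV_deriv_iff_real_differentiable by blast+
  then show "deriv (\<lambda>x. f x + g x) x = deriv f x + deriv g x"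
    by (intro DERIV_imp_deriv) (auto intro!: derivative_eq_intros)
qed

lemma deriv_mult_fun:
  fixes f g :: "real \<Rightarrow> real"
  assumes "\<And>x. f differentiable (at x)" "\<And>x. g differentiable (at x)"
  shows "deriv (\<lambda>x. f x * g x) = (\<lambda>x. deriv f x * g x + f x * deriv g x)"
proof
  fix x
  have "(f has_real_derivative deriv f x) (at x)" "(g has_real_derivative deriv g x) (at x)"
    using assms DERIV_deriv_iff_real_differentiable by blast+
  then show "deriv (\<lambda>x. f x * g x) x = deriv f x * g x + f x * deriv g x"
    by (intro DERIV_imp_deriv) (auto intro!: derivative_eq_intros)
qed

lemma deriv_inverse_fun:
  fixes f :: "real \<Rightarrow> real"
  assumes "\<And>x. f differentiable (at x)" "\<And>x. f x \<noteq> 0"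
  shows "deriv (\<lambda>x. inverse (f x)) = (\<lambda>x. - deriv f x * (inverse (f x) * inverse (f x)))"
proof
  fix x
  have "(f has_real_derivative deriv f x) (at x)"
    using assms DERIV_deriv_iff_real_differentiable by blast
  then show "deriv (\<lambda>x. inverse (f x)) x = - deriv f x * (inverse (f x) * inverse (f x))"
    using assms(2)[of x] by (intro DERIV_imp_deriv) (auto intro!: derivative_eq_intros)
qed

lemma has_real_derivative_compose_affine:
  fixes f :: "real \<Rightarrow> real"
  assumes "(f has_real_derivative D) (at (a * x + b))"
  shows "((\<lambda>x. f (a * x + b)) has_real_derivative a * D) (at x)"
proof -
  have "((\<lambda>x. a * x + b) has_real_derivative a) (at x)"
    by (auto intro!: derivative_eq_intros)
  then show ?thesis
    using DERIV_chain2[of f D "\<lambda>x. a * x + b" x a UNIV] assms by (simp add: mult.commute)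
qed

lemma deriv_compose_affine:
  fixes f :: "real \<Rightarrow> real"
  assumes "\<And>x. f differentiable (at x)"
  shows "deriv (\<lambda>x. f (a * x + b)) = (\<lambda>x. a * deriv f (a * x + b))"
  using assms by (intro ext DERIV_imp_deriv has_real_derivative_compose_affine)
    (simp add: DERIV_deriv_iff_real_differentiable)

lemma deriv2_mult:
  fixes u w :: "real \<Rightarrow> real"
  assumes "\<And>t. (u has_real_derivative u' t) (at t)" "\<And>t. (u' has_real_derivative u'' t) (at t)"
    and "\<And>t. (w has_real_derivative w' t) (at t)" "\<And>t. (w' has_real_derivative w'' t) (at t)"
  shows "deriv (deriv (\<lambda>t. u t * w t)) = (\<lambda>t. u'' t * w t + 2 * (u' t * w' t) + u t * w'' t)"
proof -
  have "deriv (\<lambda>t. u t * w t) = (\<lambda>t. u' t * w t + u t * w' t)"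
    using assms by (intro ext DERIV_imp_deriv) (auto intro!: derivative_eq_intros)
  moreover have "deriv (\<lambda>t. u' t * w t + u t * w' t) = (\<lambda>t. u'' t * w t + 2 * (u' t * w' t) + u t * w'' t)"
    using assms by (intro ext DERIV_imp_deriv) (auto intro!: derivative_eq_intros simp: algebra_simps)
  ultimately show ?thesis by simp
qed

lemma differentiable_upto_const: "differentiable_upto n (\<lambda>x. c)"
proof (induction n arbitrary: c)
  case (Suc n)
  have "deriv (\<lambda>x. c) = (\<lambda>x. 0)" by (simp add: fun_eq_iff)
  then show ?case using Suc by simp
qed simp

lemma differentiable_upto_id: "differentiable_upto n (\<lambda>x. x)"
proof (cases n)
  case (Suc m)
  have "deriv (\<lambda>x. x) = (\<lambda>x. 1)" by (simp add: fun_eq_iff)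
  then show ?thesis using Suc by (simp add: differentiable_upto_const)
qed simp

lemma differentiable_upto_add:
  "differentiable_upto n f \<Longrightarrow> differentiable_upto n g \<Longrightarrow> differentiable_upto n (\<lambda>x. f x + g x)"
  by (induction n arbitrary: f g) (auto simp: deriv_add_fun)

lemma differentiable_upto_mult:
  "differentiable_upto n f \<Longrightarrow> differentiable_upto n g \<Longrightarrow> differentiable_upto n (\<lambda>x. f x * g x)"
proof (induction n arbitrary: f g)
  case (Suc n)
  then show ?case
    using Suc.IH[of "deriv f" g] Suc.IH[of f "deriv g"] differentiable_upto_SucD
    by (auto simp: deriv_mult_fun intro!: differentiable_upto_add)
qed simp

lemma differentiable_upto_diff:
  assumes "differentiable_upto n f" "differentiable_upto n g"
  shows "differentiable_upto n (\<lambda>x. f x - g x)"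
  using differentiable_upto_add[OF assms(1) differentiable_upto_mult[OF differentiable_upto_const assms(2)],
      of "-1"] by simp

lemma differentiable_upto_power:
  "differentiable_upto n f \<Longrightarrow> differentiable_upto n (\<lambda>x. f x ^ m)"
  by (induction m) (auto intro: differentiable_upto_const differentiable_upto_mult)

lemma differentiable_upto_inverse:
  "differentiable_upto n f \<Longrightarrow> (\<And>x. f x \<noteq> 0) \<Longrightarrow> differentiable_upto n (\<lambda>x. inverse (f x))"
proof (induction n arbitrary: f)
  case 0
  then show ?case by (auto intro!: derivative_intros)
next
  case (Suc n)
  then have "differentiable_upto n (\<lambda>x. inverse (f x))"
    using differentiable_upto_SucD by blast
  moreover have "\<forall>x. (\<lambda>x. inverse (f x)) differentiable (at x)"
    using Suc.prems by (auto intro!: derivative_intros)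
  ultimately show ?case using Suc.prems
    by (auto simp: deriv_inverse_fun intro!: differentiable_upto_mult
        differentiable_upto_diff[where f="\<lambda>x. 0", OF differentiable_upto_const, simplified])
qed

lemma differentiable_upto_compose_affine:
  "differentiable_upto n f \<Longrightarrow> differentiable_upto n (\<lambda>x. f (a * x + b))"
proof (induction n arbitrary: f)
  case 0
  then show ?case
    using has_real_derivative_compose_affine real_differentiable_def by fastforce
next
  case (Suc n)
  then have "\<forall>x. (\<lambda>x. f (a * x + b)) differentiable (at x)"
    using has_real_derivative_compose_affine real_differentiable_def by fastforce
  with Suc show ?case
    by (auto simp: deriv_compose_affine intro!: differentiable_upto_mult differentiable_upto_const)
qed

lemma differentiable_upto_cos: "differentiable_upto n cos"
proof -
  have "((\<lambda>x. cos (x + real n * (pi / 2))) has_real_derivative cos (x + real (Suc n) * (pi / 2))) (at x)"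
    for n x
  proof -
    have "x + real (Suc n) * (pi / 2) = (x + real n * (pi / 2)) + pi / 2"
      by (simp add: algebra_simps)
    then have "cos (x + real (Suc n) * (pi / 2)) = - sin (x + real n * (pi / 2))"
      by (simp only: cos_add) simp
    then show ?thesis by (auto intro!: derivative_eq_intros)
  qed
  from differentiable_upto_derivative_sequence[where F="\<lambda>n x. cos (x + real n * (pi / 2))", OF this]
  show ?thesis by simp
qed

section \<open>A smooth step function\<close>

definition flat_exp :: "real \<Rightarrow> real" where
  "flat_exp x = (if x \<le> 0 then 0 else exp (- inverse x))"

(* The n-th derivative of flat_exp is P n (1/x) e^(-1/x) for x > 0; differentiating this
   expression gives the recursion P (n+1) y = y^2 (P n y - P' n y). *)
fun flat_exp_poly :: "nat \<Rightarrow> real poly" where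
  "flat_exp_poly 0 = 1"
| "flat_exp_poly (Suc n) = [:0, 0, 1:] * (flat_exp_poly n - pderiv (flat_exp_poly n))"

definition flat_exp_deriv :: "nat \<Rightarrow> real \<Rightarrow> real" where
  "flat_exp_deriv n x =
     (if x \<le> 0 then 0 else poly (flat_exp_poly n) (inverse x) * exp (- inverse x))"

lemma tendsto_poly_mult_exp_neg_at_top: "((\<lambda>z. poly p z * exp (- z)) \<longlongrightarrow> (0::real)) at_top"
proof -
  have "((\<lambda>z. \<Sum>i\<le>degree p. coeff p i * (z ^ i / exp z)) \<longlongrightarrow> 0) at_top"
    by (intro tendsto_null_sum) (use tendsto_mult[OF tendsto_const tendsto_power_div_exp_0] in simp)
  moreover have "poly p z * exp (- z) = (\<Sum>i\<le>degree p. coeff p i * (z ^ i / exp z))" for z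
    by (simp add: poly_altdef sum_distrib_right exp_minus divide_inverse mult.assoc)
  ultimately show ?thesis by simp
qed

lemma tendsto_poly_inverse_mult_exp_at_right_0:
  "((\<lambda>y. poly p (inverse y) * exp (- inverse y)) \<longlongrightarrow> (0::real)) (at_right 0)"
  using filterlim_compose[OF tendsto_poly_mult_exp_neg_at_top filterlim_inverse_at_top_right] by simp

lemma flat_exp_deriv_has_derivative_at_0:
  "(flat_exp_deriv n has_real_derivative flat_exp_deriv (Suc n) 0) (at 0)"
proof -
  let ?q = "\<lambda>y. (flat_exp_deriv n y - flat_exp_deriv n 0) / (y - 0)"
  have "(?q \<longlongrightarrow> 0) (at_left 0)"
    by (rule tendsto_eventually)
      (auto simp: eventually_at_left_field flat_exp_deriv_def intro!: exI[of _ "-1"])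
  moreover have "(?q \<longlongrightarrow> 0) (at_right 0)"
  proof (rule Lim_transform_eventually)
    show "((\<lambda>y. poly ([:0, 1:] * flat_exp_poly n) (inverse y) * exp (- inverse y)) \<longlongrightarrow> 0) (at_right 0)"
      by (rule tendsto_poly_inverse_mult_exp_at_right_0)
    show "\<forall>\<^sub>F y in at_right 0. poly ([:0, 1:] * flat_exp_poly n) (inverse y) * exp (- inverse y) = ?q y"
      by (auto simp: eventually_at_right_field flat_exp_deriv_def field_simps intro!: exI[of _ 1])
  qed
  ultimately have "(?q \<longlongrightarrow> 0) (at 0)"
    by (simp add: filterlim_at_split)
  then show ?thesis by (simp add: has_field_derivative_iff flat_exp_deriv_def)
qed

lemma flat_exp_deriv_has_derivative:
  "(flat_exp_deriv n has_real_derivative flat_exp_deriv (Suc n) x) (at x)"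
proof (cases x "0 :: real" rule: linorder_cases)
  case less
  have "((\<lambda>x. 0) has_real_derivative 0) (at x)" by simp
  then have "(flat_exp_deriv n has_real_derivative 0) (at x)"
    by (rule has_field_derivative_transform_within_open[where S="{..<0}"])
      (use less in \<open>auto simp: flat_exp_deriv_def\<close>)
  then show ?thesis using less by (simp add: flat_exp_deriv_def)
next
  case equal
  then show ?thesis using flat_exp_deriv_has_derivative_at_0 by simp
next
  case greater
  let ?p = "flat_exp_poly n"
  have "((\<lambda>x. poly ?p (inverse x) * exp (- inverse x)) has_real_derivative
          poly (pderiv ?p) (inverse x) * (- inverse (x\<^sup>2)) * exp (- inverse x)
          + poly ?p (inverse x) * (exp (- inverse x) * inverse (x\<^sup>2))) (at x)"
    using greater by (auto intro!: derivative_eq_intros DERIV_chain2[OF poly_DERIV]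
        simp: power2_eq_square field_simps)
  also have "poly (pderiv ?p) (inverse x) * (- inverse (x\<^sup>2)) * exp (- inverse x)
          + poly ?p (inverse x) * (exp (- inverse x) * inverse (x\<^sup>2)) = flat_exp_deriv (Suc n) x"
    using greater by (simp add: flat_exp_deriv_def power2_eq_square field_simps)
  finally show ?thesis
    by (rule has_field_derivative_transform_within_open[where S="{0<..}"])
      (use greater in \<open>auto simp: flat_exp_deriv_def\<close>)
qed

lemma differentiable_upto_flat_exp: "differentiable_upto n flat_exp"
proof -
  have "flat_exp = flat_exp_deriv 0"
    by (simp add: fun_eq_iff flat_exp_def flat_exp_deriv_def)
  then show ?thesis
    using differentiable_upto_derivative_sequence[where F=flat_exp_deriv, OF flat_exp_deriv_has_derivative]
    by simp
qed

definition smooth_step :: "real \<Rightarrow> real" where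
  "smooth_step x = flat_exp x / (flat_exp x + flat_exp (1 - x))"

definition smooth_step' :: "real \<Rightarrow> real" where
  "smooth_step' = deriv smooth_step"

definition smooth_step'' :: "real \<Rightarrow> real" where
  "smooth_step'' = deriv smooth_step'"

lemma flat_exp_sum_pos: "flat_exp x + flat_exp (1 - x) > 0"
  by (cases "x > 0") (auto simp: flat_exp_def add_pos_nonneg add_nonneg_pos)

lemma smooth_step_eq_0: "x \<le> 0 \<Longrightarrow> smooth_step x = 0"
  by (simp add: smooth_step_def flat_exp_def)

lemma smooth_step_eq_1: "x \<ge> 1 \<Longrightarrow> smooth_step x = 1"
  using flat_exp_sum_pos[of x] by (simp add: smooth_step_def flat_exp_def)

lemma smooth_step_bounds: "0 \<le> smooth_step x" "smooth_step x \<le> 1"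
  using flat_exp_sum_pos[of x] by (auto simp: smooth_step_def flat_exp_def)

lemma differentiable_upto_smooth_step: "differentiable_upto n smooth_step"
proof -
  have "differentiable_upto n (\<lambda>x. flat_exp x + flat_exp ((-1) * x + 1))"
    by (intro differentiable_upto_add differentiable_upto_compose_affine differentiable_upto_flat_exp)
  then have "differentiable_upto n (\<lambda>x. flat_exp x * inverse (flat_exp x + flat_exp ((-1) * x + 1)))"
    using flat_exp_sum_pos
    by (intro differentiable_upto_mult differentiable_upto_inverse differentiable_upto_flat_exp)
      (simp_all add: less_imp_neq[symmetric])
  then show ?thesis by (simp add: smooth_step_def[abs_def] divide_inverse)
qed

lemma smooth_step_has_derivatives:
  "(smooth_step has_real_derivative smooth_step' x) (at x)"
  "(smooth_step' has_real_derivative smooth_step'' x) (at x)"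
  using differentiable_upto_smooth_step[of 2]
  by (simp_all add: smooth_step'_def smooth_step''_def numeral_2_eq_2 DERIV_deriv_iff_real_differentiable
      differentiable_upto_imp_differentiable)

lemma eventually_outside_unit_interval:
  "x < 0 \<or> 1 < x \<Longrightarrow> \<forall>\<^sub>F y in nhds x. y < 0 \<or> 1 < (y::real)"
  using eventually_nhds_in_open[of "{..<0} \<union> {1<..}" x] by (auto simp: open_Un)

lemma smooth_step'_eq_0: "x < 0 \<or> 1 < x \<Longrightarrow> smooth_step' x = 0"
proof -
  assume x: "x < 0 \<or> 1 < x"
  define c where "c = (if x < 0 then 0 else 1 :: real)"
  have "\<forall>\<^sub>F y in nhds x. smooth_step y = c"
  proof (cases "x < 0")
    case True
    then have "\<forall>\<^sub>F y in nhds x. y < 0"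
      using eventually_nhds_in_open[of "{..<0}" x] by auto
    then show ?thesis using True by (auto simp: c_def smooth_step_eq_0 elim!: eventually_mono)
  next
    case False
    then have "\<forall>\<^sub>F y in nhds x. 1 < y"
      using x eventually_nhds_in_open[of "{1<..}" x] by auto
    then show ?thesis using False by (auto simp: c_def smooth_step_eq_1 elim!: eventually_mono)
  qed
  then have "smooth_step' x = deriv (\<lambda>_. c) x"
    unfolding smooth_step'_def by (rule deriv_cong_ev) simp
  then show ?thesis by simp
qed

lemma smooth_step''_eq_0: "x < 0 \<or> 1 < x \<Longrightarrow> smooth_step'' x = 0"
proof -
  assume x: "x < 0 \<or> 1 < x"
  have "\<forall>\<^sub>F y in nhds x. smooth_step' y = 0"
    using eventually_outside_unit_interval[OF x] by (auto simp: smooth_step'_eq_0 elim!: eventually_mono)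
  then have "smooth_step'' x = deriv (\<lambda>_. 0) x"
    unfolding smooth_step''_def by (rule deriv_cong_ev) simp
  then show ?thesis by simp
qed

lemma smooth_step_derivatives_bounded:
  "\<exists>M. \<forall>x. \<bar>smooth_step' x\<bar> \<le> M \<and> \<bar>smooth_step'' x\<bar> \<le> M"
proof -
  have "\<forall>x. smooth_step'' differentiable (at x)"
    using differentiable_upto_smooth_step[of 2]
    by (simp add: smooth_step'_def smooth_step''_def numeral_2_eq_2)
  then have "continuous_on {0..1} smooth_step'" "continuous_on {0..1} smooth_step''"
    using smooth_step_has_derivatives
    by (meson DERIV_isCont differentiable_imp_continuous_within continuous_at_imp_continuous_on)+
  then obtain M1 M2 where "\<forall>x\<in>{0..1}. \<bar>smooth_step' x\<bar> \<le> M1" "\<forall>x\<in>{0..1}. \<bar>smooth_step'' x\<bar> \<le> M2"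
    using compact_continuous_image[of "{0..1}"] compact_imp_bounded bounded_iff
    by (metis compact_Icc image_eqI real_norm_def)
  then have "\<bar>smooth_step' x\<bar> \<le> max M1 M2 \<and> \<bar>smooth_step'' x\<bar> \<le> max M1 M2" for x
    using smooth_step'_eq_0[of x] smooth_step''_eq_0[of x]
    by (cases "x \<in> {0..1}") (force simp: max_def)+
  then show ?thesis by blast
qed

section \<open>The test functions\<close>

(* A second antiderivative of cos (pi K t), corrected by a cubic so that it and its derivative
   vanish at t = 0 and t = 1; the correction changes the second derivative only by O(1/K^2). *)
definition cos_antideriv2 :: "nat \<Rightarrow> real \<Rightarrow> real" where
  "cos_antideriv2 K t =
     (1 - cos (pi * K * t) + ((-1) ^ K - 1) * (3 * t\<^sup>2 - 2 * t ^ 3)) / (pi * K)\<^sup>2"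

definition cos_antideriv2' :: "nat \<Rightarrow> real \<Rightarrow> real" where
  "cos_antideriv2' K t = (pi * K * sin (pi * K * t) + ((-1) ^ K - 1) * (6 * t - 6 * t\<^sup>2)) / (pi * K)\<^sup>2"

definition cos_antideriv2'' :: "nat \<Rightarrow> real \<Rightarrow> real" where
  "cos_antideriv2'' K t = cos (pi * K * t) + ((-1) ^ K - 1) * (6 - 12 * t) / (pi * K)\<^sup>2"

lemma cos_antideriv2_has_derivatives:
  assumes "K \<ge> 1"
  shows "(cos_antideriv2 K has_real_derivative cos_antideriv2' K t) (at t)"
    and "(cos_antideriv2' K has_real_derivative cos_antideriv2'' K t) (at t)"
  using assms unfolding cos_antideriv2_def[abs_def] cos_antideriv2'_def[abs_def] cos_antideriv2''_def
  by (auto intro!: derivative_eq_intros simp: power2_eq_square power3_eq_cube field_simps)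

lemma differentiable_upto_cos_antideriv2: "differentiable_upto n (cos_antideriv2 K)"
proof -
  have "differentiable_upto n (\<lambda>t. (1 - cos (pi * K * t) + ((-1) ^ K - 1) * (3 * t\<^sup>2 - 2 * t ^ 3))
                                    * inverse ((pi * K)\<^sup>2))"
    using differentiable_upto_compose_affine[OF differentiable_upto_cos, of n "pi * K" 0]
    by (intro differentiable_upto_mult differentiable_upto_add differentiable_upto_diff
        differentiable_upto_const differentiable_upto_power differentiable_upto_id) simp_all
  then show ?thesis by (simp add: cos_antideriv2_def[abs_def] divide_inverse)
qed

lemma cos_pi_mult_reflect: "cos (pi * K * (1 - t)) = (-1) ^ K * cos (pi * K * t)"
  by (simp add: right_diff_distrib cos_diff mult.commute[of pi])

lemma cos_antideriv2_reflect:
  "cos_antideriv2 K (1 - t) = (-1) ^ K * cos_antideriv2 K t"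
  "cos_antideriv2' K (1 - t) = - ((-1) ^ K * cos_antideriv2' K t)"
  "cos_antideriv2'' K (1 - t) = (-1) ^ K * cos_antideriv2'' K t"
proof -
  have sin: "sin (pi * K * (1 - t)) = - ((-1) ^ K * sin (pi * K * t))"
    by (simp add: right_diff_distrib sin_diff mult.commute[of pi])
  show "cos_antideriv2 K (1 - t) = (-1) ^ K * cos_antideriv2 K t"
    unfolding cos_antideriv2_def cos_pi_mult_reflect
    by (simp add: field_simps power2_eq_square power3_eq_cube)
  show "cos_antideriv2' K (1 - t) = - ((-1) ^ K * cos_antideriv2' K t)"
    unfolding cos_antideriv2'_def sin
    by (simp add: power2_eq_square field_simps) (simp add: minus_divide_left algebra_simps)
  show "cos_antideriv2'' K (1 - t) = (-1) ^ K * cos_antideriv2'' K t"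
    unfolding cos_antideriv2''_def cos_pi_mult_reflect
    by (simp add: field_simps power2_eq_square)
qed

lemma one_minus_cos_le: "\<bar>1 - cos x\<bar> \<le> (x::real)\<^sup>2 / 2"
proof -
  have "1 - cos x = 2 * sin (x / 2) ^ 2"
    using cos_double_sin[of "x / 2"] by simp
  moreover have "sin (x / 2) ^ 2 \<le> (x / 2)\<^sup>2"
    using abs_sin_x_le_abs_x[of "x / 2"] by (metis abs_le_square_iff)
  ultimately show ?thesis by (simp add: power_divide)
qed

lemma pi_mult_squared_ge: "K \<ge> 1 \<Longrightarrow> 9 * real K ^ 2 \<le> (pi * K)\<^sup>2"
  unfolding power_mult_distrib using power_mono[of 3 pi 2] pi_gt3 by (intro mult_right_mono) auto

lemma abs_neg_one_power_minus_one: "\<bar>(-1::real) ^ K - 1\<bar> \<le> 2"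
  by (cases "even K") auto

lemma cos_antideriv2_bounds:
  assumes K: "K \<ge> 1" and t: "0 \<le> t" "t \<le> 1"
  shows "\<bar>cos_antideriv2 K t\<bar> \<le> 2 * t\<^sup>2" and "\<bar>cos_antideriv2 K t\<bar> \<le> 1 / real K ^ 2"
proof -
  define w where "w = pi * K"
  have w: "9 \<le> w\<^sup>2" "9 * real K ^ 2 \<le> w\<^sup>2"
    using pi_mult_squared_ge[OF K] K unfolding w_def by (simp_all add: order_trans[of 9 "9 * real K ^ 2"])
  have t32: "t ^ 3 \<le> t\<^sup>2" "t\<^sup>2 \<le> 1"
    using t power_decreasing[of 2 3 t] by (simp_all add: power_le_one)
  have "\<bar>3 * t\<^sup>2 - 2 * t ^ 3\<bar> \<le> 3 * t\<^sup>2"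
    using t32 zero_le_power[OF t(1), of 3] unfolding abs_le_iff by linarith
  then have cubic: "\<bar>((-1) ^ K - 1) * (3 * t\<^sup>2 - 2 * t ^ 3)\<bar> \<le> 2 * (3 * t\<^sup>2)"
    unfolding abs_mult using abs_neg_one_power_minus_one by (intro mult_mono) auto
  have "\<bar>1 - cos (w * t)\<bar> \<le> w\<^sup>2 * t\<^sup>2 / 2"
    using one_minus_cos_le[of "w * t"] by (simp add: power_mult_distrib)
  then have "\<bar>1 - cos (w * t) + ((-1) ^ K - 1) * (3 * t\<^sup>2 - 2 * t ^ 3)\<bar> \<le> w\<^sup>2 * t\<^sup>2 / 2 + 6 * t\<^sup>2"
    using cubic abs_triangle_ineq[of "1 - cos (w * t)"] by linarith
  then have "\<bar>cos_antideriv2 K t\<bar> \<le> t\<^sup>2 / 2 + 6 * t\<^sup>2 / w\<^sup>2"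
    using w by (simp add: cos_antideriv2_def w_def abs_divide divide_le_eq field_simps)
  also have "\<dots> \<le> t\<^sup>2 / 2 + 6 * t\<^sup>2 / 9"
    using w by (intro add_left_mono divide_left_mono) auto
  finally show "\<bar>cos_antideriv2 K t\<bar> \<le> 2 * t\<^sup>2" by simp
  have "\<bar>1 - cos (w * t) + ((-1) ^ K - 1) * (3 * t\<^sup>2 - 2 * t ^ 3)\<bar> \<le> 2 + 6"
    using cubic t32 cos_le_one[of "w * t"] cos_ge_minus_one[of "w * t"] unfolding abs_le_iff by linarith
  then show "\<bar>cos_antideriv2 K t\<bar> \<le> 1 / real K ^ 2"
    using w K by (simp add: cos_antideriv2_def w_def abs_divide divide_le_eq field_simps)
qed

lemma cos_antideriv2_deriv_bounds:
  assumes K: "K \<ge> 1" and t: "0 \<le> t" "t \<le> 1"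
  shows "\<bar>cos_antideriv2' K t\<bar> \<le> 4 * t"
    and "\<bar>cos (pi * K * t) - cos_antideriv2'' K t\<bar> \<le> 2 / real K ^ 2"
    and "\<bar>cos_antideriv2'' K t\<bar> \<le> 3"
proof -
  define w where "w = pi * K"
  have w: "9 \<le> w\<^sup>2" "9 * real K ^ 2 \<le> w\<^sup>2"
    using pi_mult_squared_ge[OF K] K unfolding w_def by (simp_all add: order_trans[of 9 "9 * real K ^ 2"])
  have "t\<^sup>2 \<le> t"
    using t power_decreasing[of 1 2 t] by simp
  then have "\<bar>((-1) ^ K - 1) * (6 * t - 6 * t\<^sup>2)\<bar> \<le> 2 * (6 * t)"
    unfolding abs_mult using abs_neg_one_power_minus_one t by (intro mult_mono) (auto simp: abs_le_iff)
  moreover have "\<bar>w * sin (w * t)\<bar> \<le> w\<^sup>2 * t"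
    using abs_sin_x_le_abs_x[of "w * t"] t pi_gt_zero
    by (simp add: w_def abs_mult power2_eq_square mult_left_mono)
  ultimately have "\<bar>cos_antideriv2' K t\<bar> \<le> t + 12 * t / w\<^sup>2"
    using w by (simp add: cos_antideriv2'_def w_def abs_divide divide_le_eq field_simps abs_le_iff)
  also have "\<dots> \<le> t + 12 * t / 9"
    using w t by (intro add_left_mono divide_left_mono) auto
  finally show "\<bar>cos_antideriv2' K t\<bar> \<le> 4 * t" using t by simp
  have "\<bar>((-1) ^ K - 1) * (6 - 12 * t)\<bar> \<le> 2 * 6"
    unfolding abs_mult using abs_neg_one_power_minus_one t by (intro mult_mono) auto
  then show close: "\<bar>cos (pi * K * t) - cos_antideriv2'' K t\<bar> \<le> 2 / real K ^ 2"
    using w K by (simp add: cos_antideriv2''_def w_def abs_divide divide_le_eq field_simps)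
  have "2 / real K ^ 2 \<le> 2"
    using K by (simp add: divide_le_eq)
  then show "\<bar>cos_antideriv2'' K t\<bar> \<le> 3"
    using close abs_cos_le_one[of "pi * K * t"] by linarith
qed

definition cutoff :: "real \<Rightarrow> real \<Rightarrow> real" where
  "cutoff d t = smooth_step (t / d - 1) * smooth_step ((1 - t) / d - 1)"

definition cutoff' :: "real \<Rightarrow> real \<Rightarrow> real" where
  "cutoff' d t = smooth_step' (t / d - 1) / d * smooth_step ((1 - t) / d - 1)
                 - smooth_step (t / d - 1) * (smooth_step' ((1 - t) / d - 1) / d)"

definition cutoff'' :: "real \<Rightarrow> real \<Rightarrow> real" where
  "cutoff'' d t = smooth_step'' (t / d - 1) / d\<^sup>2 * smooth_step ((1 - t) / d - 1)
                  - 2 * (smooth_step' (t / d - 1) / d * (smooth_step' ((1 - t) / d - 1) / d))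
                  + smooth_step (t / d - 1) * (smooth_step'' ((1 - t) / d - 1) / d\<^sup>2)"

lemma smooth_step_compose_has_derivatives:
  assumes "(g has_real_derivative g') (at x within S)"
  shows "((\<lambda>x. smooth_step (g x)) has_real_derivative smooth_step' (g x) * g') (at x within S)"
    and "((\<lambda>x. smooth_step' (g x)) has_real_derivative smooth_step'' (g x) * g') (at x within S)"
  using DERIV_chain2[OF smooth_step_has_derivatives(1) assms]
    DERIV_chain2[OF smooth_step_has_derivatives(2) assms] by simp_all

lemma cutoff_has_derivatives:
  assumes "d \<noteq> 0"
  shows "(cutoff d has_real_derivative cutoff' d t) (at t)"
    and "(cutoff' d has_real_derivative cutoff'' d t) (at t)"
  unfolding cutoff_def[abs_def] cutoff'_def[abs_def] cutoff''_def using assms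
  by (auto intro!: derivative_eq_intros smooth_step_compose_has_derivatives
      simp: power2_eq_square field_simps)

lemma differentiable_upto_cutoff: "differentiable_upto n (cutoff d)"
proof -
  have "differentiable_upto n
          (\<lambda>t. smooth_step ((1 / d) * t + (-1)) * smooth_step ((-1 / d) * t + (1 / d - 1)))"
    by (intro differentiable_upto_mult differentiable_upto_compose_affine differentiable_upto_smooth_step)
  moreover have "(\<lambda>t. smooth_step ((1 / d) * t + (-1)) * smooth_step ((-1 / d) * t + (1 / d - 1)))
                 = cutoff d"
    by (simp add: fun_eq_iff cutoff_def diff_divide_distrib algebra_simps)
  ultimately show ?thesis by simp
qed

lemma cutoff_eq_0:
  assumes "0 < d" "t \<le> d \<or> 1 - d \<le> t"
  shows "cutoff d t = 0"
proof -
  have "t / d - 1 \<le> 0 \<or> (1 - t) / d - 1 \<le> 0"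
    using assms by (auto simp: divide_le_eq)
  then show ?thesis by (auto simp: cutoff_def smooth_step_eq_0)
qed

lemma cutoff_reflect:
  "cutoff d (1 - t) = cutoff d t"
  "cutoff' d (1 - t) = - cutoff' d t"
  "cutoff'' d (1 - t) = cutoff'' d t"
  by (simp_all add: cutoff_def cutoff'_def cutoff''_def algebra_simps)

lemma cutoff_left:
  assumes "0 < d" "t < 1 - 2 * d"
  shows "cutoff d t = smooth_step (t / d - 1)"
    and "cutoff' d t = smooth_step' (t / d - 1) / d"
    and "cutoff'' d t = smooth_step'' (t / d - 1) / d\<^sup>2"
proof -
  have "1 < (1 - t) / d - 1"
    using assms by (simp add: field_simps)
  then show "cutoff d t = smooth_step (t / d - 1)"
    and "cutoff' d t = smooth_step' (t / d - 1) / d"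
    and "cutoff'' d t = smooth_step'' (t / d - 1) / d\<^sup>2"
    by (simp_all add: cutoff_def cutoff'_def cutoff''_def smooth_step_eq_1
        smooth_step'_eq_0 smooth_step''_eq_0)
qed

lemma cutoff_middle:
  assumes "0 < d" "2 * d < t" "t < 1 - 2 * d"
  shows "cutoff d t = 1" "cutoff' d t = 0" "cutoff'' d t = 0"
proof -
  have "1 < t / d - 1"
    using assms by (simp add: field_simps)
  then show "cutoff d t = 1" "cutoff' d t = 0" "cutoff'' d t = 0"
    using cutoff_left[OF assms(1,3)]
    by (simp_all add: smooth_step_eq_1 smooth_step'_eq_0 smooth_step''_eq_0)
qed

definition cos_test_fun :: "nat \<Rightarrow> real \<Rightarrow> real \<Rightarrow> real" where
  "cos_test_fun K d t = cutoff d t * cos_antideriv2 K t"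

definition cos_test_fun'' :: "nat \<Rightarrow> real \<Rightarrow> real \<Rightarrow> real" where
  "cos_test_fun'' K d t = cutoff'' d t * cos_antideriv2 K t + 2 * (cutoff' d t * cos_antideriv2' K t)
                          + cutoff d t * cos_antideriv2'' K t"

lemma test_fun_cos_test_fun:
  assumes "0 < d" "d < 1 / 2"
  shows "test_fun (cos_test_fun K d)"
proof -
  have "differentiable_upto n (cos_test_fun K d)" for n
    using differentiable_upto_mult[OF differentiable_upto_cutoff differentiable_upto_cos_antideriv2]
    by (simp add: cos_test_fun_def[abs_def])
  then have "\<forall>n x. (deriv ^^ n) (cos_test_fun K d) differentiable (at x)"
    using differentiable_upto_funpow_deriv by blast
  moreover have "\<forall>t. t \<notin> {d..1 - d} \<longrightarrow> cos_test_fun K d t = 0"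
    using assms by (auto simp: cos_test_fun_def cutoff_eq_0)
  ultimately show ?thesis
    using assms unfolding test_fun_def by (intro conjI exI[of _ d] exI[of _ "1 - d"]) auto
qed

lemma deriv2_cos_test_fun:
  assumes "K \<ge> 1" "d \<noteq> 0"
  shows "deriv (deriv (cos_test_fun K d)) = cos_test_fun'' K d"
  using deriv2_mult[OF cutoff_has_derivatives[OF assms(2)] cos_antideriv2_has_derivatives[OF assms(1)]]
  by (simp add: cos_test_fun_def[abs_def] cos_test_fun''_def[abs_def])

lemma cos_test_fun''_reflect:
  "cos_test_fun'' K d (1 - t) = (-1) ^ K * cos_test_fun'' K d t"
  by (simp add: cos_test_fun''_def cutoff_reflect cos_antideriv2_reflect algebra_simps)

lemma cos_test_fun''_error_middle:
  assumes "K \<ge> 1" "0 < d" "2 * d < t" "t < 1 - 2 * d"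
  shows "\<bar>cos (pi * K * t) - cos_test_fun'' K d t\<bar> \<le> 2 / real K ^ 2"
  using assms cutoff_middle[of d t] cos_antideriv2_deriv_bounds(2)[of K t]
  by (simp add: cos_test_fun''_def)

lemma cos_test_fun''_error_left:
  assumes M: "\<And>x. \<bar>smooth_step' x\<bar> \<le> M" "\<And>x. \<bar>smooth_step'' x\<bar> \<le> M"
    and K: "K \<ge> 1" and d: "0 < d" "d \<le> 1 / 8" and t: "0 \<le> t" "t \<le> 2 * d"
  shows "\<bar>cos (pi * K * t) - cos_test_fun'' K d t\<bar> \<le> 4 + 24 * M"
proof -
  have "0 \<le> M" using M(1) abs_ge_zero order_trans by blast
  have "t < 1 - 2 * d" "t \<le> 1" using t d by auto
  note cutoff = cutoff_left[OF d(1) this(1)]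
    and v = cos_antideriv2_bounds[OF K t(1) this(2)] cos_antideriv2_deriv_bounds[OF K t(1) this(2)]
  have "t\<^sup>2 \<le> (2 * d)\<^sup>2" using t by (intro power_mono) auto
  then have "\<bar>smooth_step'' (t / d - 1) * cos_antideriv2 K t\<bar> \<le> M * (8 * d\<^sup>2)"
    unfolding abs_mult using M(2) v(1) \<open>0 \<le> M\<close> by (intro mult_mono) (auto simp: power_mult_distrib)
  then have 1: "\<bar>cutoff'' d t * cos_antideriv2 K t\<bar> \<le> 8 * M"
    using d by (simp add: cutoff abs_divide abs_mult divide_le_eq field_simps)
  have "\<bar>smooth_step' (t / d - 1) * cos_antideriv2' K t\<bar> \<le> M * (4 * (2 * d))"
    unfolding abs_mult using M(1) v(3) t \<open>0 \<le> M\<close> by (intro mult_mono) auto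
  then have 2: "\<bar>cutoff' d t * cos_antideriv2' K t\<bar> \<le> 8 * M"
    using d by (simp add: cutoff abs_divide abs_mult divide_le_eq field_simps)
  have "\<bar>smooth_step (t / d - 1) * cos_antideriv2'' K t\<bar> \<le> 1 * 3"
    unfolding abs_mult using smooth_step_bounds v(5) by (intro mult_mono) auto
  then have 3: "\<bar>cutoff d t * cos_antideriv2'' K t\<bar> \<le> 3"
    by (simp add: cutoff)
  show ?thesis
    using 1 2 3 abs_cos_le_one[of "pi * K * t"] unfolding cos_test_fun''_def abs_le_iff by linarith
qed

lemma cos_test_fun''_error_boundary:
  assumes M: "\<And>x. \<bar>smooth_step' x\<bar> \<le> M" "\<And>x. \<bar>smooth_step'' x\<bar> \<le> M"
    and K: "K \<ge> 1" and d: "0 < d" "d \<le> 1 / 8"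
    and t: "0 \<le> t" "t \<le> 1" "t \<le> 2 * d \<or> 1 - 2 * d \<le> t"
  shows "\<bar>cos (pi * K * t) - cos_test_fun'' K d t\<bar> \<le> 4 + 24 * M"
proof -
  note left = cos_test_fun''_error_left[OF M K d]
  have "cos (pi * K * t) - cos_test_fun'' K d t
          = (-1) ^ K * (cos (pi * K * (1 - t)) - cos_test_fun'' K d (1 - t))"
    using cos_pi_mult_reflect[of K "1 - t"] cos_test_fun''_reflect[of K d "1 - t"]
    by (simp add: algebra_simps flip: power_add)
  then show ?thesis
    using t left[of t] left[of "1 - t"] by (auto simp: abs_mult)
qed

lemma cos_test_fun_bound:
  assumes "K \<ge> 1" "0 \<le> t" "t \<le> 1"
  shows "\<bar>cos_test_fun K d t\<bar> \<le> 1 / real K ^ 2"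
proof -
  have "\<bar>cutoff d t\<bar> \<le> 1"
    unfolding cutoff_def abs_mult using smooth_step_bounds by (intro mult_le_one) auto
  then have "\<bar>cos_test_fun K d t\<bar> \<le> 1 * (1 / real K ^ 2)"
    unfolding cos_test_fun_def abs_mult
    using cos_antideriv2_bounds(2)[OF assms] by (intro mult_mono) auto
  then show ?thesis by simp
qed

lemma continuous_cos_test_fun:
  assumes "K \<ge> 1" "d \<noteq> 0"
  shows "continuous_on S (cos_test_fun K d)" "continuous_on S (cos_test_fun'' K d)"
proof -
  have "differentiable_upto 2 (cos_test_fun K d)"
    using differentiable_upto_mult[OF differentiable_upto_cutoff differentiable_upto_cos_antideriv2]
    by (simp add: cos_test_fun_def[abs_def])
  then have "cos_test_fun K d differentiable (at t)" "cos_test_fun'' K d differentiable (at t)" for t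
    using deriv2_cos_test_fun[OF assms] by (simp_all add: numeral_2_eq_2)
  then show "continuous_on S (cos_test_fun K d)" "continuous_on S (cos_test_fun'' K d)"
    by (meson differentiable_imp_continuous_within continuous_at_imp_continuous_on)+
qed

section \<open>Decay of the cosine coefficients\<close>

lemma Cauchy_Schwarz_integral:
  fixes f g :: "'a \<Rightarrow> real"
  assumes [measurable]: "f \<in> borel_measurable M" "g \<in> borel_measurable M"
    and f2: "integrable M (\<lambda>x. (f x)\<^sup>2)" and g2: "integrable M (\<lambda>x. (g x)\<^sup>2)"
  shows "integrable M (\<lambda>x. f x * g x)"
    and "\<bar>integral\<^sup>L M (\<lambda>x. f x * g x)\<bar>
           \<le> sqrt (integral\<^sup>L M (\<lambda>x. (f x)\<^sup>2)) * sqrt (integral\<^sup>L M (\<lambda>x. (g x)\<^sup>2))"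
proof -
  have amgm: "\<bar>f x * g x\<bar> \<le> ((f x)\<^sup>2 + (g x)\<^sup>2) / 2" for x
    using sum_squares_bound[of "\<bar>f x\<bar>" "\<bar>g x\<bar>"] by (simp add: abs_mult)
  show fg: "integrable M (\<lambda>x. f x * g x)"
    by (rule Bochner_Integration.integrable_bound[where f="\<lambda>x. ((f x)\<^sup>2 + (g x)\<^sup>2) / 2"])
      (use f2 g2 amgm in \<open>auto intro!: order_trans[OF _ abs_ge_self]\<close>)
  define F G P where "F = integral\<^sup>L M (\<lambda>x. (f x)\<^sup>2)" and "G = integral\<^sup>L M (\<lambda>x. (g x)\<^sup>2)"
    and "P = integral\<^sup>L M (\<lambda>x. \<bar>f x\<bar> * \<bar>g x\<bar>)"
  have FG: "0 \<le> F" "0 \<le> G" "0 \<le> P"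
    by (auto simp: F_def G_def P_def)
  have sq: "ennreal \<bar>h\<bar> ^ 2 = ennreal (h\<^sup>2)" for h :: real
    by (simp add: ennreal_power)
  have "(\<integral>\<^sup>+x. ennreal \<bar>f x\<bar> * ennreal \<bar>g x\<bar> \<partial>M)\<^sup>2
          \<le> (\<integral>\<^sup>+x. ennreal \<bar>f x\<bar> ^ 2 \<partial>M) * (\<integral>\<^sup>+x. ennreal \<bar>g x\<bar> ^ 2 \<partial>M)"
    by (rule Cauchy_Schwarz_nn_integral) auto
  moreover have "(\<integral>\<^sup>+x. ennreal \<bar>f x\<bar> * ennreal \<bar>g x\<bar> \<partial>M) = ennreal P"
    using fg by (simp add: P_def ennreal_mult[symmetric] nn_integral_eq_integral abs_mult[symmetric])
  moreover have "(\<integral>\<^sup>+x. ennreal \<bar>f x\<bar> ^ 2 \<partial>M) = ennreal F"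
    using f2 by (simp add: F_def sq nn_integral_eq_integral)
  moreover have "(\<integral>\<^sup>+x. ennreal \<bar>g x\<bar> ^ 2 \<partial>M) = ennreal G"
    using g2 by (simp add: G_def sq nn_integral_eq_integral)
  ultimately have "P\<^sup>2 \<le> F * G"
    using FG by (simp add: ennreal_power ennreal_mult[symmetric])
  then have "P \<le> sqrt F * sqrt G"
    using FG by (metis real_le_rsqrt real_sqrt_mult)
  moreover have "\<bar>integral\<^sup>L M (\<lambda>x. f x * g x)\<bar> \<le> P"
    unfolding P_def abs_mult[symmetric] using integral_abs_bound .
  ultimately show "\<bar>integral\<^sup>L M (\<lambda>x. f x * g x)\<bar> \<le> sqrt F * sqrt G"
    by linarith
qed

lemma L2_01_continuous: "continuous_on {0..1} h \<Longrightarrow> L2_01 h"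
  unfolding L2_01_def
  by (auto intro!: continuous_imp_measurable_on_sets_lebesgue continuous_imp_integrable_real
      continuous_intros)

lemma boundary_layers_measure:
  assumes "0 < d" "d \<le> 1 / 4"
  shows "{0..2 * d} \<union> {1 - 2 * d..1} \<in> sets (lebesgue_on {0..1})"
    and "measure (lebesgue_on {0..1}) ({0..2 * d} \<union> {1 - 2 * d..1}) \<le> 4 * d"
proof -
  show "{0..2 * d} \<union> {1 - 2 * d..1} \<in> sets (lebesgue_on {0..1})"
    using assms by (auto simp: sets_restrict_space_iff)
  have "measure (lebesgue_on {0..1}) ({0..2 * d} \<union> {1 - 2 * d..1})
          = measure lebesgue ({0..2 * d} \<union> {1 - 2 * d..1::real})"
    using assms by (intro measure_restrict_space) auto
  also have "\<dots> \<le> measure lebesgue {0..2 * d} + measure lebesgue {1 - 2 * d..1::real}"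
    by (intro measure_Un_le) auto
  also have "\<dots> = 4 * d" using assms by simp
  finally show "measure (lebesgue_on {0..1}) ({0..2 * d} \<union> {1 - 2 * d..1}) \<le> 4 * d" .
qed

lemma integral_cos_test_fun''_error_sq:
  assumes M: "\<And>x. \<bar>smooth_step' x\<bar> \<le> M" "\<And>x. \<bar>smooth_step'' x\<bar> \<le> M"
    and K: "K \<ge> 1" and d: "0 < d" "d \<le> 1 / 8"
  shows "integral\<^sup>L (lebesgue_on {0..1}) (\<lambda>t. (cos (pi * K * t) - cos_test_fun'' K d t)\<^sup>2)
           \<le> (4 + 24 * M)\<^sup>2 * (4 * d) + (2 / real K ^ 2)\<^sup>2"
proof -
  let ?e = "\<lambda>t. cos (pi * K * t) - cos_test_fun'' K d t"
  let ?U = "lebesgue_on {0..1::real}"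
  define B where "B = {0..2 * d} \<union> {1 - 2 * d..1}"
  have B: "B \<in> sets ?U" "B \<inter> space ?U = B" and measure_B: "measure ?U B \<le> 4 * d"
    using boundary_layers_measure[of d] d by (auto simp: B_def)
  have "0 \<le> M" using M(1) abs_ge_zero order_trans by blast
  have pointwise: "(?e t)\<^sup>2 \<le> (4 + 24 * M)\<^sup>2 * indicator B t + (2 / real K ^ 2)\<^sup>2"
    if t: "t \<in> {0..1}" for t
  proof (cases "t \<in> B")
    case True
    then have "\<bar>?e t\<bar> \<le> \<bar>4 + 24 * M\<bar>"
      using cos_test_fun''_error_boundary[OF M K d, of t] t unfolding B_def by force
    then have "(?e t)\<^sup>2 \<le> (4 + 24 * M)\<^sup>2" using abs_le_square_iff by blast
    then show ?thesis using True by (simp add: add_increasing2)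
  next
    case False
    then have "2 * d < t" "t < 1 - 2 * d" using t unfolding B_def by auto
    then have "\<bar>?e t\<bar> \<le> \<bar>2 / real K ^ 2\<bar>"
      using cos_test_fun''_error_middle[OF K d(1)] by force
    then have "(?e t)\<^sup>2 \<le> (2 / real K ^ 2)\<^sup>2" using abs_le_square_iff by blast
    then show ?thesis using False by simp
  qed
  have "continuous_on {0..1} ?e"
    using d by (intro continuous_intros continuous_cos_test_fun(2)[OF K]) simp
  then have "integrable ?U (\<lambda>t. (?e t)\<^sup>2)"
    using L2_01_continuous by (simp add: L2_01_def)
  moreover have ind: "integrable ?U (indicator B :: real \<Rightarrow> real)"
    using B(1) finite_measure.emeasure_finite[OF finite_measure_lebesgue_on[of "{0..1}"], of B]
    by (intro integrable_real_indicator) (simp_all add: top.not_eq_extremum)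
  ultimately have "integral\<^sup>L ?U (\<lambda>t. (?e t)\<^sup>2)
          \<le> integral\<^sup>L ?U (\<lambda>t. (4 + 24 * M)\<^sup>2 * indicator B t + (2 / real K ^ 2)\<^sup>2)"
    using pointwise by (intro integral_mono) auto
  also have "\<dots> = (4 + 24 * M)\<^sup>2 * measure ?U B + (2 / real K ^ 2)\<^sup>2"
    using B ind measure_restrict_space[of "{0..1::real}" lebesgue "{0..1}"] by simp
  also have "\<dots> \<le> (4 + 24 * M)\<^sup>2 * (4 * d) + (2 / real K ^ 2)\<^sup>2"
    using measure_B by (intro add_right_mono mult_left_mono) auto
  finally show ?thesis .
qed

lemma H2_norm_bounds:
  "0 \<le> H2_norm f g"
  "sqrt (integral\<^sup>L (lebesgue_on {0..1}) (\<lambda>x. (f x)\<^sup>2)) \<le> H2_norm f g"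
  "sqrt (integral\<^sup>L (lebesgue_on {0..1}) (\<lambda>x. (g x)\<^sup>2)) \<le> H2_norm f g"
  unfolding H2_norm_def by (auto intro!: real_sqrt_le_mono integral_nonneg)

lemma abs_integral_mult_le_L2:
  assumes f: "L2_01 f" and h: "L2_01 h"
    and c: "integral\<^sup>L (lebesgue_on {0..1}) (\<lambda>t. (h t)\<^sup>2) \<le> c\<^sup>2" "0 \<le> c"
  shows "\<bar>integral\<^sup>L (lebesgue_on {0..1}) (\<lambda>t. f t * h t)\<bar>
           \<le> sqrt (integral\<^sup>L (lebesgue_on {0..1}) (\<lambda>t. (f t)\<^sup>2)) * c"
proof -
  have "\<bar>integral\<^sup>L (lebesgue_on {0..1}) (\<lambda>t. f t * h t)\<bar>
          \<le> sqrt (integral\<^sup>L (lebesgue_on {0..1}) (\<lambda>t. (f t)\<^sup>2))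
            * sqrt (integral\<^sup>L (lebesgue_on {0..1}) (\<lambda>t. (h t)\<^sup>2))"
    using f h unfolding L2_01_def by (intro Cauchy_Schwarz_integral(2)) auto
  also have "\<dots> \<le> sqrt (integral\<^sup>L (lebesgue_on {0..1}) (\<lambda>t. (f t)\<^sup>2)) * c"
    using real_sqrt_le_mono[OF c(1)] c(2) by (intro mult_left_mono) auto
  finally show ?thesis .
qed

lemma integral_square_le_of_abs_le:
  assumes h: "L2_01 h" and c: "\<And>t. t \<in> {0..1} \<Longrightarrow> \<bar>h t\<bar> \<le> c"
  shows "integral\<^sup>L (lebesgue_on {0..1}) (\<lambda>t. (h t)\<^sup>2) \<le> c\<^sup>2"
proof -
  have sq: "(h t)\<^sup>2 \<le> c\<^sup>2" if "t \<in> {0..1}" for t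
    using c[OF that] abs_le_square_iff[of "h t" c] by simp
  have "integral\<^sup>L (lebesgue_on {0..1}) (\<lambda>t. (h t)\<^sup>2) \<le> integral\<^sup>L (lebesgue_on {0..1::real}) (\<lambda>t. c\<^sup>2)"
    by (intro integral_mono) (use h sq in \<open>auto simp: L2_01_def\<close>)
  also have "\<dots> = c\<^sup>2"
    using measure_restrict_space[of "{0..1::real}" lebesgue "{0..1}"] by simp
  finally show ?thesis .
qed

lemma cos_coeff_bound:
  assumes M: "\<And>x. \<bar>smooth_step' x\<bar> \<le> M" "\<And>x. \<bar>smooth_step'' x\<bar> \<le> M"
    and H: "H2_with_deriv f g" and K: "K \<ge> 1"
  shows "\<bar>integral\<^sup>L (lebesgue_on {0..1}) (\<lambda>t. f t * cos (pi * K * t))\<bar>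
           \<le> (sqrt ((4 + 24 * M)\<^sup>2 + 4) + 1) / real K ^ 2 * H2_norm f g"
proof -
  let ?U = "lebesgue_on {0..1::real}" and ?A = "sqrt ((4 + 24 * M)\<^sup>2 + 4)"
  define d where "d = 1 / (8 * real K ^ 4)"
  have d: "0 < d" "d \<le> 1 / 8"
    using K by (auto simp: d_def divide_le_eq)
  define \<phi> \<phi>'' where "\<phi> = cos_test_fun K d" and "\<phi>'' = cos_test_fun'' K d"
  define e where "e t = cos (pi * K * t) - \<phi>'' t" for t
  have f: "L2_01 f" and g: "L2_01 g"
    and weak: "integral\<^sup>L ?U (\<lambda>t. f t * \<phi>'' t) = integral\<^sup>L ?U (\<lambda>t. g t * \<phi> t)"
    using H test_fun_cos_test_fun[OF d(1), of K] d deriv2_cos_test_fun[OF K, of d]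
    by (auto simp: H2_with_deriv_def \<phi>_def \<phi>''_def)
  have \<phi>: "L2_01 \<phi>" and \<phi>'': "L2_01 \<phi>''" and e: "L2_01 e"
    using d continuous_cos_test_fun[OF K, of d]
    by (auto simp: \<phi>_def \<phi>''_def e_def intro!: L2_01_continuous continuous_intros)
  have "integral\<^sup>L ?U (\<lambda>t. (e t)\<^sup>2) \<le> ((4 + 24 * M)\<^sup>2 / 2 + 4) / (real K ^ 2)\<^sup>2"
    using integral_cos_test_fun''_error_sq[OF M K d] K
    by (simp add: e_def \<phi>''_def d_def power_divide field_simps flip: power_mult)
  also have "\<dots> \<le> (?A / real K ^ 2)\<^sup>2"
    by (simp add: power_divide divide_right_mono)
  finally have "\<bar>integral\<^sup>L ?U (\<lambda>t. f t * e t)\<bar>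
                  \<le> sqrt (integral\<^sup>L ?U (\<lambda>t. (f t)\<^sup>2)) * (?A / real K ^ 2)"
    by (intro abs_integral_mult_le_L2[OF f e]) simp_all
  also have "\<dots> \<le> H2_norm f g * (?A / real K ^ 2)"
    by (intro mult_right_mono H2_norm_bounds(2)) simp
  finally have fe: "\<bar>integral\<^sup>L ?U (\<lambda>t. f t * e t)\<bar> \<le> H2_norm f g * (?A / real K ^ 2)" .
  have "integral\<^sup>L ?U (\<lambda>t. (\<phi> t)\<^sup>2) \<le> (1 / real K ^ 2)\<^sup>2"
    using \<phi> cos_test_fun_bound[OF K] by (intro integral_square_le_of_abs_le) (auto simp: \<phi>_def)
  then have "\<bar>integral\<^sup>L ?U (\<lambda>t. g t * \<phi> t)\<bar>
               \<le> sqrt (integral\<^sup>L ?U (\<lambda>t. (g t)\<^sup>2)) * (1 / real K ^ 2)"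
    by (intro abs_integral_mult_le_L2[OF g \<phi>]) simp_all
  also have "\<dots> \<le> H2_norm f g * (1 / real K ^ 2)"
    by (intro mult_right_mono H2_norm_bounds(3)) simp
  finally have g\<phi>: "\<bar>integral\<^sup>L ?U (\<lambda>t. g t * \<phi> t)\<bar> \<le> H2_norm f g * (1 / real K ^ 2)" .
  have "integral\<^sup>L ?U (\<lambda>t. f t * cos (pi * K * t)) = integral\<^sup>L ?U (\<lambda>t. f t * e t + f t * \<phi>'' t)"
    by (simp add: e_def algebra_simps)
  also have "\<dots> = integral\<^sup>L ?U (\<lambda>t. f t * e t) + integral\<^sup>L ?U (\<lambda>t. g t * \<phi> t)"
    using Cauchy_Schwarz_integral(1)[of f ?U e] Cauchy_Schwarz_integral(1)[of f ?U \<phi>''] f e \<phi>'' weak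
    by (simp add: L2_01_def)
  moreover have "(?A + 1) / real K ^ 2 * H2_norm f g
      = H2_norm f g * (?A / real K ^ 2) + H2_norm f g * (1 / real K ^ 2)"
    by (simp add: algebra_simps add_divide_distrib)
  ultimately show ?thesis
    using fe g\<phi> abs_triangle_ineq[of "integral\<^sup>L ?U (\<lambda>t. f t * e t)"] by linarith
qed

lemma L2_01_imp_integrable:
  assumes "L2_01 f"
  shows "integrable (lebesgue_on {0..1}) f"
proof -
  interpret finite_measure "lebesgue_on {0..1::real}"
    by (rule finite_measure_lebesgue_on) auto
  from assms have "f \<in> borel_measurable (lebesgue_on {0..1})"
    and "integrable (lebesgue_on {0..1}) (\<lambda>x. (f x)\<^sup>2)"
    by (simp_all add: L2_01_def)
  then show ?thesis
    by (rule square_integrable_imp_integrable)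
qed

lemma cos_coeff_decay:
  "\<exists>C>0. \<forall>f g K. H2_with_deriv f g \<longrightarrow>
     \<bar>integral\<^sup>L (lebesgue_on {0..1}) (\<lambda>t. f t * cos (pi * K * t))\<bar> * (1 + real K)\<^sup>2
       \<le> C * H2_norm f g"
proof -
  obtain M where M: "\<And>x. \<bar>smooth_step' x\<bar> \<le> M" "\<And>x. \<bar>smooth_step'' x\<bar> \<le> M"
    using smooth_step_derivatives_bounded by blast
  define D where "D = sqrt ((4 + 24 * M)\<^sup>2 + 4) + 1"
  have "1 \<le> D"
    unfolding D_def using real_sqrt_ge_zero[of "(4 + 24 * M)\<^sup>2 + 4"] by simp
  have bound: "\<bar>integral\<^sup>L (lebesgue_on {0..1}) (\<lambda>t. f t * cos (pi * K * t))\<bar> * (1 + real K)\<^sup>2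
          \<le> (4 * D) * H2_norm f g" if H: "H2_with_deriv f g" for f g K
  proof (cases "K = 0")
    case True
    have "L2_01 f" using H by (simp add: H2_with_deriv_def)
    moreover have one: "L2_01 (\<lambda>_. 1)"
      by (rule L2_01_continuous) simp
    moreover have "integral\<^sup>L (lebesgue_on {0..1::real}) (\<lambda>_. (1::real)\<^sup>2) \<le> 1\<^sup>2"
      by (rule integral_square_le_of_abs_le[OF one]) simp
    ultimately have "\<bar>integral\<^sup>L (lebesgue_on {0..1}) (\<lambda>t. f t * 1)\<bar>
                       \<le> sqrt (integral\<^sup>L (lebesgue_on {0..1}) (\<lambda>t. (f t)\<^sup>2)) * 1"
      by (intro abs_integral_mult_le_L2) auto
    also have "\<dots> \<le> H2_norm f g"
      using H2_norm_bounds(2) by simp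
    also have "\<dots> \<le> (4 * D) * H2_norm f g"
      using H2_norm_bounds(1)[of f g] \<open>1 \<le> D\<close> by (intro mult_le_cancel_right1[THEN iffD2]) auto
    finally show ?thesis using True by simp
  next
    case False
    then have "(1 + real K)\<^sup>2 \<le> 4 * real K ^ 2"
      using power_mono[of "1 + real K" "2 * real K" 2] by (simp add: power_mult_distrib)
    then have "\<bar>integral\<^sup>L (lebesgue_on {0..1}) (\<lambda>t. f t * cos (pi * K * t))\<bar> * (1 + real K)\<^sup>2
        \<le> (D / real K ^ 2 * H2_norm f g) * (4 * real K ^ 2)"
      using cos_coeff_bound[OF M H, of K, folded D_def] False by (intro mult_mono) auto
    also have "\<dots> = (4 * D) * H2_norm f g"
      using False by simp
    finally show ?thesis .
  qed
  moreover have "4 * D > 0"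
    using \<open>1 \<le> D\<close> by simp
  ultimately show ?thesis by blast
qed

section \<open>The tent transform\<close>

lemma has_integral_tent_halves:
  fixes P Q H :: "real \<Rightarrow> 'b::banach"
  assumes P: "(P has_integral A) {0..1}" and Q: "(Q has_integral B) {0..1}"
    and HP: "\<And>y. y \<in> {0..1/2} \<Longrightarrow> H y = P (1 - 2 * y)"
    and HQ: "\<And>y. y \<in> {1/2..1} \<Longrightarrow> H y = Q (2 * y - 1)"
  shows "(H has_integral (A + B) /\<^sub>R 2) {0..1}"
proof -
  have "((\<lambda>y. P ((-2) * y + 1)) has_integral (1/2) *\<^sub>R A) {0..1/2}"
    using has_integral_affinity01[OF P, of "-2" 1]
    unfolding image_affinity_atLeastAtMost_div_diff by simp
  then have left: "(H has_integral (1/2) *\<^sub>R A) {0..1/2}"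
    by (rule has_integral_eq[rotated]) (simp add: HP)
  have "((\<lambda>y. Q (2 * y + (-1))) has_integral (1/2) *\<^sub>R B) {1/2..1}"
    using has_integral_affinity01[OF Q, of 2 "-1"]
    unfolding image_affinity_atLeastAtMost_div_diff by simp
  then have right: "(H has_integral (1/2) *\<^sub>R B) {1/2..1}"
    by (rule has_integral_eq[rotated]) (simp add: HQ)
  show ?thesis
    using has_integral_combine[of 0 "1/2" 1 H, OF _ _ left right] by (simp add: scaleR_add_right)
qed

lemma integrable_of_real_mult_cis:
  fixes f :: "real \<Rightarrow> real"
  assumes f: "integrable (lebesgue_on S) f" and S: "S \<in> sets lebesgue"
  shows "integrable (lebesgue_on S) (\<lambda>t. complex_of_real (f t) * cis (c * t))"
proof (rule Bochner_Integration.integrable_bound[OF integrable_norm[OF f]])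
  have "(\<lambda>t. cis (c * t)) \<in> borel_measurable (lebesgue_on S)"
    using S by (intro continuous_imp_measurable_on_sets_lebesgue continuous_intros) auto
  then show "(\<lambda>t. complex_of_real (f t) * cis (c * t)) \<in> borel_measurable (lebesgue_on S)"
    using borel_measurable_integrable[OF f] by measurable
qed (simp add: norm_mult)

lemma has_integral_tent_mult_cis:
  fixes f :: "real \<Rightarrow> real"
  assumes f: "integrable (lebesgue_on {0..1}) f"
  shows "((\<lambda>y. complex_of_real (tent f y) * cis (- 2 * pi * k * y)) has_integral
           cis (- pi * k) * complex_of_real (integral\<^sup>L (lebesgue_on {0..1}) (\<lambda>t. f t * cos (pi * k * t))))
         {0..1}"
proof -
  let ?U = "lebesgue_on {0..1::real}" and ?s = "cis (- pi * k)"
  define Fp Fm where "Fp t = complex_of_real (f t) * cis (pi * k * t)"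
    and "Fm t = complex_of_real (f t) * cis ((- pi * k) * t)" for t
  have Fp: "integrable ?U Fp" and Fm: "integrable ?U Fm"
    unfolding Fp_def[abs_def] Fm_def[abs_def] by (rule integrable_of_real_mult_cis[OF f], simp)+
  have "((\<lambda>y. complex_of_real (tent f y) * cis (- 2 * pi * k * y)) has_integral
          (?s * integral\<^sup>L ?U Fp + ?s * integral\<^sup>L ?U Fm) /\<^sub>R 2) {0..1}"
  proof (rule has_integral_tent_halves)
    show "((\<lambda>t. ?s * Fp t) has_integral ?s * integral\<^sup>L ?U Fp) {0..1}"
      "((\<lambda>t. ?s * Fm t) has_integral ?s * integral\<^sup>L ?U Fm) {0..1}"
      using Fp Fm by (auto intro!: has_integral_mult_right has_integral_integral_lebesgue_on)
    show "complex_of_real (tent f y) * cis (- 2 * pi * k * y) = ?s * Fp (1 - 2 * y)"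
      if "y \<in> {0..1/2}" for y
    proof -
      have "tent f y = f (1 - 2 * y)" using that by (simp add: tent_def)
      then show ?thesis by (simp add: Fp_def cis_mult algebra_simps)
    qed
    show "complex_of_real (tent f y) * cis (- 2 * pi * k * y) = ?s * Fm (2 * y - 1)"
      if "y \<in> {1/2..1}" for y
    proof -
      have "tent f y = f (2 * y - 1)" using that by (simp add: tent_def)
      then show ?thesis by (simp add: Fm_def cis_mult algebra_simps)
    qed
  qed
  moreover have "(?s * integral\<^sup>L ?U Fp + ?s * integral\<^sup>L ?U Fm) /\<^sub>R 2
      = ?s * ((integral\<^sup>L ?U Fp + integral\<^sup>L ?U Fm) / 2)"
    by (simp add: scaleR_conv_of_real field_simps)
  moreover have "integral\<^sup>L ?U Fp + integral\<^sup>L ?U Fm = integral\<^sup>L ?U (\<lambda>t. Fp t + Fm t)"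
    using Fp Fm by simp
  moreover have "\<dots> = integral\<^sup>L ?U (\<lambda>t. complex_of_real (2 * (f t * cos (pi * k * t))))"
    by (intro Bochner_Integration.integral_cong) (simp_all add: Fp_def Fm_def complex_eq_iff)
  ultimately show ?thesis
    by (simp only: integral_complex_of_real integral_mult_right_zero) simp
qed

lemma fourier_coeff_tent:
  fixes f :: "real \<Rightarrow> real"
  assumes f: "integrable (lebesgue_on {0..1}) f"
  shows "fourier_coeff (\<lambda>x. complex_of_real (tent f x)) k
           = cis (- pi * k) * complex_of_real
               (integral\<^sup>L (lebesgue_on {0..1}) (\<lambda>t. f t * cos (pi * k * t)))"
proof -
  let ?U = "lebesgue_on {0..1::real}"
  define H where "H y = complex_of_real (tent f y) * cis (- 2 * pi * k * y)" for y
  have H: "(H has_integral cis (- pi * k) * complex_of_real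
             (integral\<^sup>L ?U (\<lambda>t. f t * cos (pi * k * t)))) {0..1}"
    unfolding H_def[abs_def] by (rule has_integral_tent_mult_cis[OF f])
  have "((\<lambda>y. \<bar>tent f y\<bar>) has_integral
          (integral\<^sup>L ?U (\<lambda>t. \<bar>f t\<bar>) + integral\<^sup>L ?U (\<lambda>t. \<bar>f t\<bar>)) /\<^sub>R 2) {0..1}"
    using has_integral_integral_lebesgue_on[OF integrable_abs[OF f]]
    by (intro has_integral_tent_halves) (auto simp: tent_def)
  then have "H absolutely_integrable_on {0..1}"
    using H by (intro absolutely_integrable_integrable_bound[where g="\<lambda>y. \<bar>tent f y\<bar>"])
      (auto simp: H_def norm_mult)
  then have "integrable ?U H"
    by (auto intro: absolutely_integrable_imp_integrable)
  then have "integral\<^sup>L ?U H = integral {0..1} H"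
    by (simp add: lebesgue_integral_eq_integral)
  moreover have "fourier_coeff (\<lambda>x. complex_of_real (tent f x)) k = integral\<^sup>L ?U H"
    unfolding fourier_coeff_def H_def by (simp add: cis_conv_exp mult_ac)
  ultimately show ?thesis
    using integral_unique[OF H] by simp
qed

theorem lemma6p1:
  "\<exists>C>0. \<forall>f g. H2_with_deriv f g \<longrightarrow>
     (\<forall>k::int. cmod (fourier_coeff (\<lambda>x. complex_of_real (tent f x)) k)
                * (1 + \<bar>real_of_int k\<bar>)\<^sup>2 \<le> C * H2_norm f g)"
proof -
  obtain C where "C > 0" and decay: "\<And>f g K. H2_with_deriv f g \<Longrightarrow>
      \<bar>integral\<^sup>L (lebesgue_on {0..1}) (\<lambda>t. f t * cos (pi * K * t))\<bar> * (1 + real K)\<^sup>2 \<le> C * H2_norm f g"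
    using cos_coeff_decay by blast
  have "cmod (fourier_coeff (\<lambda>x. complex_of_real (tent f x)) k) * (1 + \<bar>real_of_int k\<bar>)\<^sup>2
          \<le> C * H2_norm f g" if H: "H2_with_deriv f g" for f g k
  proof -
    define K where "K = nat \<bar>k\<bar>"
    have K: "\<bar>real_of_int k\<bar> = real K" "cos (pi * k * t) = cos (pi * K * t)" for t
      by (auto simp: K_def abs_if)
    have "integrable (lebesgue_on {0..1}) f"
      using H by (simp add: H2_with_deriv_def L2_01_imp_integrable)
    then have "cmod (fourier_coeff (\<lambda>x. complex_of_real (tent f x)) k)
                 = \<bar>integral\<^sup>L (lebesgue_on {0..1}) (\<lambda>t. f t * cos (pi * K * t))\<bar>"
      by (simp add: fourier_coeff_tent norm_mult K)
    then show ?thesis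
      using decay[OF H, of K] by (simp add: K)
  qed
  with \<open>C > 0\<close> show ?thesis
    by (intro exI[of _ C]) auto
qed

end
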